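(* Fix a partition $\Pi$ of $V(G)$ into sets of sizes divisible by $r$. Suppose each $f_v$ is $K_v$-Lipschitz and let $K_{\max}=\max_vK_v$. If $\mathcal P$ is sampled uniformly from the set of partitions of $V(G)$ into $n$ sets of size $r$ each contained in a single part of $\Pi$, and $T=T_{\vec B,\mathcal P}$ with $\vec B$ independent of $\mathcal P$, then $$\mathbb E_{\mathcal P}\Big[\big(\mathbb E_{\vec B}(\xi\mid\mathcal P)\big)^2\Big]\le\frac{2K_{\max}^2|\Pi|}{nr\,d_{\min}}.$$
   Context: Let $n,p,q$ be positive integers, $r=p+q$, $G$ a finite simple graph with $|V(G)|=rn$ and no isolated vertices; $\mathcal N(v)$, $d(v)$, $d_{\min}$ neighbor set, degree, minimum degree. For each $v$, $f_v:2^{\mathcal N(v)}\to\mathbb R$ with $f_v(\emptyset)=0$. $\sigma_T(v)=q$ if $v\in T$, $-p$ otherwise; for $|T|=pn$, $\xi=\frac1{pqn}\sum_v\sigma_T(v)f_v(T\cap\mathcal N(v))$. $f_v$ is $K_v$-Lipschitz ($K_v>0$) if $|f_v(A)-f_v(A')|\le K_v|A\triangle A'|/d(v)$ for all $A,A'\subseteq\mathcal N(v)$. Restricted randomization: for $\mathcal P=(S_1,\dots,S_n)$, $S_i=\{w_i^1,\dots,w_i^r\}$, $B_i$ i.i.d. uniform $p$-subsets of $\{1,\dots,r\}$, $T_{\vec B,\mathcal P}=\{w_i^j:j\in B_i\}$. *)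

theory Defs
  imports "HOL-Probability.Probability" "HOL-Library.Disjoint_Sets"
begin

definition simple_graph :: "'a set \<Rightarrow> ('a \<Rightarrow> 'a \<Rightarrow> bool) \<Rightarrow> bool" where
  "simple_graph V E \<longleftrightarrow> finite V \<and> (\<forall>u v. E u v \<longrightarrow> u \<in> V \<and> v \<in> V)
     \<and> (\<forall>u v. E u v \<longrightarrow> E v u) \<and> (\<forall>v. \<not> E v v)"

definition nbhd :: "('a \<Rightarrow> 'a \<Rightarrow> bool) \<Rightarrow> 'a \<Rightarrow> 'a set" where
  "nbhd E v = {u. E v u}"

definition deg :: "('a \<Rightarrow> 'a \<Rightarrow> bool) \<Rightarrow> 'a \<Rightarrow> nat" where
  "deg E v = card (nbhd E v)"

definition min_deg :: "'a set \<Rightarrow> ('a \<Rightarrow> 'a \<Rightarrow> bool) \<Rightarrow> nat" where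
  "min_deg V E = Min (deg E ` V)"

definition lipschitz_fv :: "('a \<Rightarrow> 'a \<Rightarrow> bool) \<Rightarrow> ('a set \<Rightarrow> real) \<Rightarrow> real \<Rightarrow> 'a \<Rightarrow> bool" where
  "lipschitz_fv E g K v \<longleftrightarrow> K > 0 \<and>
     (\<forall>A A'. A \<subseteq> nbhd E v \<longrightarrow> A' \<subseteq> nbhd E v \<longrightarrow>
        \<bar>g A - g A'\<bar> \<le> K * real (card (A - A' \<union> (A' - A))) / real (deg E v))"

definition sigma :: "nat \<Rightarrow> nat \<Rightarrow> 'a set \<Rightarrow> 'a \<Rightarrow> real" where
  "sigma p q T v = (if v \<in> T then real q else - real p)"

definition xi :: "'a set \<Rightarrow> ('a \<Rightarrow> 'a \<Rightarrow> bool) \<Rightarrow> ('a \<Rightarrow> 'a set \<Rightarrow> real) \<Rightarrow> nat \<Rightarrow> nat \<Rightarrow> nat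
                  \<Rightarrow> 'a set \<Rightarrow> real" where
  "xi V E f p q n T = (1 / (real p * real q * real n)) *
     (\<Sum>v\<in>V. sigma p q T v * f v (T \<inter> nbhd E v))"

definition restricted_partitions :: "'a set \<Rightarrow> nat \<Rightarrow> 'a set set \<Rightarrow> 'a set set set" where
  "restricted_partitions V r Parts =
     {P. partition_on V P \<and> (\<forall>S\<in>P. card S = r \<and> (\<exists>X\<in>Parts. S \<subseteq> X))}"

text \<open>Possible values of T_{B,P}: T contains exactly p elements of each block
  (each choice of (B_i) gives a distinct such T, so uniform B gives uniform T).\<close>
definition restricted_T :: "'a set \<Rightarrow> nat \<Rightarrow> 'a set set \<Rightarrow> 'a set set" where
  "restricted_T V p P = {T. T \<subseteq> V \<and> (\<forall>S\<in>P. card (T \<inter> S) = p)}"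

end

theory Submission
  imports Defs "HOL-Combinatorics.Transposition"
begin

(*
  Fix P and a vertex v with block S. The exchange T \<mapsto> T - {v} \<union> {w}, w \<in> S - T, matches
  the sets T containing v (weight q) with those avoiding v (weight -p), so the contribution
  of v to E(\<xi> | P) is a sum of Lipschitz differences, each at most K_v / d(v) and nonzero
  only when w is a neighbour of v. Hence |E(\<xi> | P)| is at most K_max / (pqn) times
  \<Sigma>_v d(v)^-1 \<Sigma>_{u \<in> N(v)} Pr(u is in the block of v, v \<in> T, u \<notin> T), and this double sum
  is at most pqn / d_min; so E(\<xi> | P)^2 is at most K_max / d_min times the bound.

  Averaging over P, the probability that v and u are split in this way is invariant under
  transpositions inside a part X of \<Pi>, hence constant on pairs of distinct vertices of X,
  and double counting gives the value pq / (r (|X| - 1)) \<le> 2pq / (r |X|). Summing over the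
  d(v) neighbours of v and the vertices of X leaves 2pq/r per part.
*)

lemma sum_partition_on:
  assumes "partition_on A P" "finite A"
  shows "sum h A = (\<Sum>S\<in>P. sum h S)"
proof -
  have A: "A = \<Union>P" using assms(1) by (rule partition_onD1)
  then have "\<forall>S\<in>P. finite S" using assms(2) by (metis Union_upper finite_subset)
  then show ?thesis using A sum.Union_disjoint_sets[of P h] partition_onD2[OF assms(1)] by simp
qed

lemma card_partition_on_Int:
  assumes "partition_on A P" "finite A" "B \<subseteq> A"
  shows "card B = (\<Sum>S\<in>P. card (S \<inter> B))"
proof -
  have "card B = (\<Sum>v\<in>A. of_bool (v \<in> B))"
    using assms(2,3) by (simp add: Int_absorb1)
  also have "\<dots> = (\<Sum>S\<in>P. \<Sum>v\<in>S. of_bool (v \<in> B))"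
    by (rule sum_partition_on[OF assms(1,2)])
  also have "\<dots> = (\<Sum>S\<in>P. card (S \<inter> B))"
    using partition_onD1[OF assms(1)] assms(2)
    by (intro sum.cong refl) (simp add: finite_subset[OF Union_upper])
  finally show ?thesis .
qed

lemma double_count_incidences:
  assumes "finite A" "finite B"
  shows "(\<Sum>x\<in>A. card (B \<inter> R x)) = (\<Sum>y\<in>B. card {x\<in>A. y \<in> R x})"
proof -
  have "(\<Sum>x\<in>A. card (B \<inter> R x)) = (\<Sum>x\<in>A. \<Sum>y\<in>B. of_bool (y \<in> R x))"
    using assms(2) by (simp add: Collect_mem_eq)
  also have "\<dots> = (\<Sum>y\<in>B. \<Sum>x\<in>A. of_bool (y \<in> R x))"
    by (rule sum.swap)
  also have "\<dots> = (\<Sum>y\<in>B. card {x\<in>A. y \<in> R x})"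
    using assms(1) by (simp add: Collect_conj_eq Int_commute)
  finally show ?thesis .
qed

lemma exists_partition_on_card_blocks:
  assumes "r > 0" "finite X" "card X = r * k"
  shows "\<exists>P. partition_on X P \<and> (\<forall>S\<in>P. card S = r)"
  using assms(2,3)
proof (induction k arbitrary: X)
  case 0
  then show ?case by (auto simp: partition_on_empty)
next
  case (Suc k)
  then obtain S where S: "S \<subseteq> X" "card S = r"
    by (metis le_add1 mult_Suc_right obtain_subset_with_card_n)
  then have "card (X - S) = r * k" using Suc by (simp add: card_Diff_subset finite_subset)
  then obtain P where P: "partition_on (X - S) P" "\<forall>S\<in>P. card S = r"
    using Suc by blast
  have "disjnt S (\<Union>P)" using partition_onD1[OF P(1)] by (auto simp: disjnt_def)
  moreover have "S \<noteq> {}" using S assms(1) by auto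
  ultimately have "partition_on X (insert S P)"
    using partition_on_insert P S by blast
  then show ?case using P S by auto
qed

lemma partition_on_UN:
  assumes "partition_on A \<X>" and Q: "\<And>X. X \<in> \<X> \<Longrightarrow> partition_on X (Q X)"
  shows "partition_on A (\<Union>X\<in>\<X>. Q X)"
proof (rule partition_onI)
  have "\<Union>(Q X) = X" if "X \<in> \<X>" for X using Q[OF that] by (rule partition_onD1[symmetric])
  then show "\<Union>(\<Union>X\<in>\<X>. Q X) = A"
    using partition_onD1[OF assms(1)] by (simp add: Union_SetCompr_eq) blast
next
  have Q_sub: "S \<subseteq> X" if "X \<in> \<X>" "S \<in> Q X" for S X
    using partition_onD1[OF Q[OF that(1)]] that(2) by blast
  fix S S' assume "S \<in> (\<Union>X\<in>\<X>. Q X)" "S' \<in> (\<Union>X\<in>\<X>. Q X)" "S \<noteq> S'"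
  then obtain X X' where X: "X \<in> \<X>" "S \<in> Q X" "X' \<in> \<X>" "S' \<in> Q X'" by blast
  show "disjnt S S'"
  proof (cases "X = X'")
    case True
    then show ?thesis
      using partition_onD2[OF Q[OF X(1)]] X \<open>S \<noteq> S'\<close> by (auto simp: disjoint_def disjnt_def)
  next
    case False
    then have "disjnt X X'" using partition_onD2[OF assms(1)] X by (auto simp: disjoint_def disjnt_def)
    then show ?thesis using Q_sub X by (meson disjnt_subset1 disjnt_subset2)
  qed
next
  show "{} \<notin> (\<Union>X\<in>\<X>. Q X)" using Q partition_onD3 by blast
qed

definition block_of :: "'a set set \<Rightarrow> 'a \<Rightarrow> 'a set" where
  "block_of P v = \<Union>{S\<in>P. v \<in> S}"

lemma block_of_eq:
  assumes "disjoint P" "S \<in> P" "v \<in> S"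
  shows "block_of P v = S"
  using assms unfolding block_of_def disjoint_def by blast

lemma block_of_image:
  assumes "inj f"
  shows "block_of ((`) f ` P) (f v) = f ` block_of P v"
  using assms unfolding block_of_def by (auto simp: inj_image_mem_iff dest: injD)

lemma transpose_image_image [simp]:
  "Transposition.transpose a b ` Transposition.transpose a b ` A = A"
  by (simp add: image_comp)

lemma inj_on_image_transpose: "inj_on ((`) (Transposition.transpose a b)) \<A>"
  by (rule inj_onI) (metis transpose_image_image)

lemma in_image_transpose_image_iff:
  "A \<in> (`) (Transposition.transpose a b) ` \<A> \<longleftrightarrow> Transposition.transpose a b ` A \<in> \<A>"
proof
  assume "Transposition.transpose a b ` A \<in> \<A>"
  then show "A \<in> (`) (Transposition.transpose a b) ` \<A>" by (rule rev_image_eqI) simp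
qed auto

lemma transpose_invariant_const_on_pairs:
  assumes inv: "\<And>a b v u. a \<in> X \<Longrightarrow> b \<in> X \<Longrightarrow>
      F (Transposition.transpose a b v) (Transposition.transpose a b u) = F v u"
    and "v \<in> X" "u \<in> X" "v \<noteq> u" "v' \<in> X" "u' \<in> X" "v' \<noteq> u'"
  shows "F v u = F v' u'"
proof -
  have move_second: "F v u = F v u'" if "u \<in> X" "u' \<in> X" "u \<noteq> v" "u' \<noteq> v" for v u u'
    using inv[OF that(1,2), of v u] that by (cases "u = u'") auto
  have move_first: "F v u = F v' u" if "v \<in> X" "v' \<in> X" "v \<noteq> u" "v' \<noteq> u" for v v' u
    using inv[OF that(1,2), of v u] that by (cases "v = v'") auto
  show ?thesis
  proof (cases "u = v'")
    case False
    have "F v u = F v' u" using assms False by (intro move_first) auto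
    also have "\<dots> = F v' u'" using assms False by (intro move_second) auto
    finally show ?thesis .
  next
    case True
    show ?thesis
    proof (cases "u' = v")
      case True
      then show ?thesis using inv[OF \<open>v \<in> X\<close> \<open>v' \<in> X\<close>, of v v'] \<open>u = v'\<close> by simp
    next
      case False
      have "F v u = F v u'" using assms False by (intro move_second) auto
      also have "\<dots> = F v' u'" using assms False \<open>u = v'\<close> by (intro move_first) auto
      finally show ?thesis .
    qed
  qed
qed

lemma exchange_bij_betw:
  assumes v: "v \<in> S"
    and exchange: "\<And>T a b. T \<in> \<T> \<Longrightarrow> a \<in> S \<inter> T \<Longrightarrow> b \<in> S - T \<Longrightarrow> insert b (T - {a}) \<in> \<T>"
  shows "bij_betw (\<lambda>(T, w). (insert w (T - {v}), w))
           (SIGMA T:{T\<in>\<T>. v \<in> T}. S - T) (SIGMA T:{T\<in>\<T>. v \<notin> T}. S \<inter> T)"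
proof (rule bij_betw_byWitness[where f' = "\<lambda>(T, w). (insert v (T - {w}), w)"])
  show "(\<lambda>(T, w). (insert w (T - {v}), w)) ` (SIGMA T:{T\<in>\<T>. v \<in> T}. S - T)
      \<subseteq> (SIGMA T:{T\<in>\<T>. v \<notin> T}. S \<inter> T)"
  proof (rule image_subsetI)
    fix x assume "x \<in> (SIGMA T:{T\<in>\<T>. v \<in> T}. S - T)"
    then obtain T w where "x = (T, w)" "T \<in> \<T>" "v \<in> T" "w \<in> S - T" by blast
    then show "(\<lambda>(T, w). (insert w (T - {v}), w)) x \<in> (SIGMA T:{T\<in>\<T>. v \<notin> T}. S \<inter> T)"
      using exchange[of T v w] v by auto
  qed
  show "(\<lambda>(T, w). (insert v (T - {w}), w)) ` (SIGMA T:{T\<in>\<T>. v \<notin> T}. S \<inter> T)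
      \<subseteq> (SIGMA T:{T\<in>\<T>. v \<in> T}. S - T)"
  proof (rule image_subsetI)
    fix x assume "x \<in> (SIGMA T:{T\<in>\<T>. v \<notin> T}. S \<inter> T)"
    then obtain T w where "x = (T, w)" "T \<in> \<T>" "v \<notin> T" "w \<in> S \<inter> T" by blast
    then show "(\<lambda>(T, w). (insert v (T - {w}), w)) x \<in> (SIGMA T:{T\<in>\<T>. v \<in> T}. S - T)"
      using exchange[of T w v] v by auto
  qed
qed auto

lemma exchange_identity:
  fixes G :: "'a set \<Rightarrow> real" and \<T> :: "'a set set"
  assumes fin: "finite \<T>" "finite S" and v: "v \<in> S"
    and card_Int: "\<And>T. T \<in> \<T> \<Longrightarrow> card (S \<inter> T) = p"
    and card_Diff: "\<And>T. T \<in> \<T> \<Longrightarrow> card (S - T) = q"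
    and exchange: "\<And>T a b. T \<in> \<T> \<Longrightarrow> a \<in> S \<inter> T \<Longrightarrow> b \<in> S - T \<Longrightarrow> insert b (T - {a}) \<in> \<T>"
  shows "(\<Sum>T\<in>\<T>. sigma p q T v * G T)
       = (\<Sum>T\<in>{T\<in>\<T>. v \<in> T}. \<Sum>w\<in>S - T. G T - G (insert w (T - {v})))"
proof -
  \<comment> \<open>In the bijection exchange_bij_betw, each T containing v is the first component of
    q pairs and each T avoiding v of p pairs.\<close>
  define A where "A = {T\<in>\<T>. v \<in> T}"
  define B where "B = {T\<in>\<T>. v \<notin> T}"
  have finAB: "finite A" "finite B" using fin by (auto simp: A_def B_def)
  have "(\<Sum>T\<in>\<T>. sigma p q T v * G T) = (\<Sum>T\<in>\<T>. if v \<in> T then q * G T else - (p * G T))"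
    by (intro sum.cong) (auto simp: sigma_def)
  also have "\<dots> = (\<Sum>T\<in>A. q * G T) - (\<Sum>T\<in>B. p * G T)"
    unfolding A_def B_def using fin(1)
    by (simp add: sum.If_cases Collect_conj_eq Collect_neg_eq sum_negf)
  also have "(\<Sum>T\<in>A. q * G T) = (\<Sum>T\<in>A. \<Sum>w\<in>S - T. G T)"
    using card_Diff by (intro sum.cong) (auto simp: A_def)
  also have "\<dots> = (\<Sum>(T, w)\<in>Sigma A (\<lambda>T. S - T). G T)"
    using fin(2) by (intro sum.Sigma finAB) auto
  also have "(\<Sum>T\<in>B. p * G T) = (\<Sum>T\<in>B. \<Sum>w\<in>S \<inter> T. G T)"
    using card_Int by (intro sum.cong) (auto simp: B_def)
  also have "\<dots> = (\<Sum>(T, w)\<in>Sigma B (\<lambda>T. S \<inter> T). G T)"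
    using fin(2) by (intro sum.Sigma finAB) auto
  also have "\<dots> = (\<Sum>(T, w)\<in>Sigma A (\<lambda>T. S - T). G (insert w (T - {v})))"
    using sum.reindex_bij_betw[OF exchange_bij_betw[OF v exchange], of "\<lambda>(T, w). G T"]
    by (simp add: A_def B_def case_prod_beta' split_def)
  also have "(\<Sum>(T, w)\<in>Sigma A (\<lambda>T. S - T). G T) - \<dots>
      = (\<Sum>T\<in>A. \<Sum>w\<in>S - T. G T - G (insert w (T - {v})))"
    using fin(2) by (simp add: sum_subtractf[symmetric] sum.Sigma[OF finAB(1)] case_prod_beta')
  finally show ?thesis unfolding A_def .
qed

lemma lipschitz_fv_exchange:
  assumes lip: "lipschitz_fv E g K v" and "\<not> E v v" "w \<notin> T"
  shows "\<bar>g (T \<inter> nbhd E v) - g (insert w (T - {v}) \<inter> nbhd E v)\<bar>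
         \<le> (if w \<in> nbhd E v then K / deg E v else 0)"
proof (cases "w \<in> nbhd E v")
  case True
  have bound: "\<And>A A'. A \<subseteq> nbhd E v \<Longrightarrow> A' \<subseteq> nbhd E v \<Longrightarrow>
      \<bar>g A - g A'\<bar> \<le> K * card (A - A' \<union> (A' - A)) / deg E v"
    using lip unfolding lipschitz_fv_def by blast
  let ?A = "T \<inter> nbhd E v"
  have "insert w (T - {v}) \<inter> nbhd E v = insert w ?A"
    using True assms(2) by (auto simp: nbhd_def)
  moreover have "?A - insert w ?A \<union> (insert w ?A - ?A) = {w}"
    using assms(3) by auto
  moreover have "\<bar>g ?A - g (insert w ?A)\<bar> \<le> K * card (?A - insert w ?A \<union> (insert w ?A - ?A)) / deg E v"
    using True by (intro bound) auto
  ultimately show ?thesis using True by simp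
next
  case False
  then have "insert w (T - {v}) \<inter> nbhd E v = T \<inter> nbhd E v"
    using assms(2) by (auto simp: nbhd_def)
  then show ?thesis using False by simp
qed

locale restricted_randomization =
  fixes V :: "'a set" and Parts :: "'a set set" and p q r :: nat
  assumes finite_V: "finite V"
    and p_pos: "p > 0" and q_pos: "q > 0" and r_eq: "r = p + q"
    and partition_Parts: "partition_on V Parts"
    and dvd_card_part: "\<And>X. X \<in> Parts \<Longrightarrow> r dvd card X"
begin

abbreviation "RP \<equiv> restricted_partitions V r Parts"
abbreviation "RT P \<equiv> restricted_T V p P"

lemma part_subset: "X \<in> Parts \<Longrightarrow> X \<subseteq> V"
  using partition_onD1[OF partition_Parts] by blast

lemma finite_part: "X \<in> Parts \<Longrightarrow> finite X"
  by (rule finite_subset[OF part_subset finite_V])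

lemma part_unique: "X \<in> Parts \<Longrightarrow> Y \<in> Parts \<Longrightarrow> x \<in> X \<Longrightarrow> x \<in> Y \<Longrightarrow> X = Y"
  using partition_onD2[OF partition_Parts] by (auto simp: disjoint_def)

lemma card_V_eq_sum_parts: "card V = (\<Sum>X\<in>Parts. card X)"
  using sum_partition_on[OF partition_Parts finite_V, of "\<lambda>_. 1::nat"] by simp

lemma two_le_card_part:
  assumes "X \<in> Parts"
  shows "2 \<le> card X"
proof -
  have "X \<noteq> {}" using partition_onD3[OF partition_Parts] assms by auto
  then have "r \<le> card X"
    using dvd_card_part[OF assms] finite_part[OF assms] by (simp add: card_gt_0_iff dvd_imp_le)
  then show ?thesis using p_pos q_pos r_eq by linarith
qed

lemma RP_D:
  assumes "P \<in> RP"
  shows "partition_on V P" and "\<And>S. S \<in> P \<Longrightarrow> card S = r"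
    and "\<And>S. S \<in> P \<Longrightarrow> \<exists>X\<in>Parts. S \<subseteq> X"
  using assms by (auto simp: restricted_partitions_def)

lemma RP_block_subset: "P \<in> RP \<Longrightarrow> S \<in> P \<Longrightarrow> S \<subseteq> V"
  using partition_onD1[OF RP_D(1)] by blast

lemma finite_RP_block: "P \<in> RP \<Longrightarrow> S \<in> P \<Longrightarrow> finite S"
  by (rule finite_subset[OF RP_block_subset finite_V])

lemma block_of_RP_eq: "P \<in> RP \<Longrightarrow> S \<in> P \<Longrightarrow> v \<in> S \<Longrightarrow> block_of P v = S"
  by (rule block_of_eq[OF partition_onD2[OF RP_D(1)]])

lemma block_of_RP:
  assumes "P \<in> RP" "v \<in> V"
  shows "block_of P v \<in> P" "v \<in> block_of P v"
proof -
  obtain S where "S \<in> P" "v \<in> S" using partition_onD1[OF RP_D(1)[OF assms(1)]] assms(2) by blast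
  then show "block_of P v \<in> P" "v \<in> block_of P v" using block_of_RP_eq[OF assms(1)] by auto
qed

lemma block_of_subset_part:
  assumes P: "P \<in> RP" and X: "X \<in> Parts" "v \<in> X"
  shows "block_of P v \<subseteq> X"
proof -
  have v: "v \<in> V" using part_subset X by blast
  obtain Y where Y: "Y \<in> Parts" "block_of P v \<subseteq> Y"
    using RP_D(3)[OF P block_of_RP(1)[OF P v]] by blast
  then have "Y = X" using part_unique[OF _ X(1)] block_of_RP(2)[OF P v] X(2) by blast
  then show ?thesis using Y(2) by blast
qed

lemma finite_RP: "finite RP"
proof -
  have "RP \<subseteq> Pow (Pow V)" by (auto dest: RP_block_subset)
  then show ?thesis using finite_V finite_subset by blast
qed

lemma RP_nonempty: "RP \<noteq> {}"
proof -
  have "\<exists>Q. partition_on X Q \<and> (\<forall>S\<in>Q. card S = r)" if X: "X \<in> Parts" for X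
    using exists_partition_on_card_blocks[of r X "card X div r"] dvd_card_part[OF X]
      finite_part[OF X] p_pos r_eq by simp
  then obtain Q where Q: "\<And>X. X \<in> Parts \<Longrightarrow> partition_on X (Q X) \<and> (\<forall>S\<in>Q X. card S = r)"
    by metis
  have "partition_on V (\<Union>X\<in>Parts. Q X)"
    using Q by (intro partition_on_UN[OF partition_Parts]) blast
  moreover have "S \<subseteq> X" if "X \<in> Parts" "S \<in> Q X" for S X
    using Q[OF that(1)] partition_onD1 that(2) by blast
  ultimately have "(\<Union>X\<in>Parts. Q X) \<in> RP"
    unfolding restricted_partitions_def using Q by blast
  then show ?thesis by blast
qed

lemma finite_RT: "finite (RT P)"
proof -
  have "RT P \<subseteq> Pow V" by (auto simp: restricted_T_def)
  then show ?thesis using finite_V finite_subset by blast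
qed

lemma RT_nonempty:
  assumes P: "P \<in> RP"
  shows "RT P \<noteq> {}"
proof -
  have "\<exists>C. C \<subseteq> S \<and> card C = p" if "S \<in> P" for S
  proof -
    have "p \<le> card S" using RP_D(2)[OF P that] r_eq by simp
    then show ?thesis by (meson obtain_subset_with_card_n)
  qed
  then obtain C where C: "\<And>S. S \<in> P \<Longrightarrow> C S \<subseteq> S \<and> card (C S) = p" by metis
  have "\<Union>(C ` P) \<inter> S = C S" if S: "S \<in> P" for S
  proof
    show "C S \<subseteq> \<Union>(C ` P) \<inter> S" using C[OF S] S by blast
    have "C S' \<inter> S \<subseteq> C S" if "S' \<in> P" for S'
      using C[OF that] S that partition_onD2[OF RP_D(1)[OF P]]
      by (cases "S' = S") (auto simp: disjoint_def)
    then show "\<Union>(C ` P) \<inter> S \<subseteq> C S" by blast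
  qed
  moreover have "\<Union>(C ` P) \<subseteq> V" using C RP_block_subset[OF P] by blast
  ultimately have "\<Union>(C ` P) \<in> RT P" using C by (simp add: restricted_T_def)
  then show ?thesis by blast
qed

lemma card_block_Int_RT: "T \<in> RT P \<Longrightarrow> S \<in> P \<Longrightarrow> card (S \<inter> T) = p"
  by (simp add: restricted_T_def Int_commute)

lemma card_block_Diff_RT:
  assumes "P \<in> RP" "T \<in> RT P" "S \<in> P"
  shows "card (S - T) = q"
  using card_Diff_subset_Int[of S T] finite_RP_block[OF assms(1,3)] RP_D(2)[OF assms(1,3)]
    card_block_Int_RT[OF assms(2,3)] r_eq by simp

lemma RT_exchange:
  assumes P: "P \<in> RP" and S: "S \<in> P" and T: "T \<in> RT P" and "a \<in> S \<inter> T" "b \<in> S - T"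
  shows "insert b (T - {a}) \<in> RT P"
proof -
  have "card (S' \<inter> insert b (T - {a})) = p" if S': "S' \<in> P" for S'
  proof (cases "S' = S")
    case True
    have "S \<inter> insert b (T - {a}) = insert b (S \<inter> T - {a})" using assms(5) by auto
    then show ?thesis
      using True assms(4,5) finite_RP_block[OF P S] card_block_Int_RT[OF T S] p_pos by simp
  next
    case False
    then have "a \<notin> S'" "b \<notin> S'"
      using partition_onD2[OF RP_D(1)[OF P]] S S' assms(4,5) by (auto simp: disjoint_def)
    then have "S' \<inter> insert b (T - {a}) = S' \<inter> T" by auto
    then show ?thesis using card_block_Int_RT[OF T S'] by simp
  qed
  moreover have "insert b (T - {a}) \<subseteq> V"
    using T RP_block_subset[OF P S] assms(5) by (auto simp: restricted_T_def)
  ultimately show ?thesis by (simp add: restricted_T_def Int_commute)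
qed

lemma card_part_Int_RT:
  assumes P: "P \<in> RP" and T: "T \<in> RT P" and X: "X \<in> Parts"
  shows "card (X \<inter> T) * r = p * card X"
proof -
  have per_block: "card (S \<inter> (X \<inter> T)) * r = p * card (S \<inter> X)" if S: "S \<in> P" for S
  proof -
    obtain Y where "Y \<in> Parts" "S \<subseteq> Y" using RP_D(3)[OF P S] by blast
    then consider "S \<subseteq> X" | "S \<inter> X = {}" using part_unique[OF X] by blast
    then show ?thesis
    proof cases
      case 1
      then have "S \<inter> (X \<inter> T) = S \<inter> T" "S \<inter> X = S" by blast+
      then show ?thesis using card_block_Int_RT[OF T S] RP_D(2)[OF P S] by simp
    next
      case 2
      then have "S \<inter> (X \<inter> T) = {}" by blast
      then show ?thesis using 2 by simp
    qed
  qed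
  have "X \<inter> T \<subseteq> V" using part_subset[OF X] by blast
  then have "card (X \<inter> T) * r = (\<Sum>S\<in>P. card (S \<inter> (X \<inter> T))) * r"
    using card_partition_on_Int[OF RP_D(1)[OF P] finite_V] by simp
  also have "\<dots> = p * (\<Sum>S\<in>P. card (S \<inter> X))"
    using per_block by (simp add: sum_distrib_left sum_distrib_right)
  also have "\<dots> = p * card X"
    using card_partition_on_Int[OF RP_D(1)[OF P] finite_V part_subset[OF X]] by simp
  finally show ?thesis .
qed

definition split_count :: "'a set set \<Rightarrow> 'a \<Rightarrow> 'a \<Rightarrow> nat" where
  "split_count P v u = card {T \<in> RT P. v \<in> T \<and> u \<in> block_of P v - T}"

text \<open>The probability, for P uniform in RP and then T uniform in RT P (the law of the
  restricted randomization), that u lies in the block of v with v \<in> T and u \<notin> T.\<close>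
definition split_prob :: "'a \<Rightarrow> 'a \<Rightarrow> real" where
  "split_prob v u = (\<Sum>P\<in>RP. real (split_count P v u) / real (card (RT P))) / real (card RP)"

lemma split_count_eq_0:
  assumes "P \<in> RP" "X \<in> Parts" "v \<in> X" "u \<notin> X - {v}"
  shows "split_count P v u = 0"
proof -
  have "{T \<in> RT P. v \<in> T \<and> u \<in> block_of P v - T} = {}"
    using block_of_subset_part[OF assms(1-3)] assms(4) by blast
  then show ?thesis unfolding split_count_def by (metis card.empty)
qed

lemma sum_split_count_part:
  assumes P: "P \<in> RP" and X: "X \<in> Parts"
  shows "(\<Sum>v\<in>X. \<Sum>u\<in>X - {v}. split_count P v u) * r = card (RT P) * (p * q * card X)"
proof -
  have per_T: "(\<Sum>v\<in>X. card ((X - {v}) \<inter> {u. v \<in> T \<and> u \<in> block_of P v - T})) = q * card (X \<inter> T)"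
    if T: "T \<in> RT P" for T
  proof -
    have "card ((X - {v}) \<inter> {u. v \<in> T \<and> u \<in> block_of P v - T}) = (if v \<in> T then q else 0)"
      if v: "v \<in> X" for v
    proof -
      have vV: "v \<in> V" using part_subset X v by blast
      have "(X - {v}) \<inter> {u. v \<in> T \<and> u \<in> block_of P v - T} = (if v \<in> T then block_of P v - T else {})"
        using block_of_subset_part[OF P X v] by auto
      then show ?thesis using card_block_Diff_RT[OF P T block_of_RP(1)[OF P vV]] by simp
    qed
    then show ?thesis using finite_part[OF X] by (simp add: sum.If_cases Int_commute)
  qed
  have "(\<Sum>u\<in>X - {v}. split_count P v u)
      = (\<Sum>T\<in>RT P. card ((X - {v}) \<inter> {u. v \<in> T \<and> u \<in> block_of P v - T}))" for v
    using double_count_incidences[of "RT P" "X - {v}" "\<lambda>T. {u. v \<in> T \<and> u \<in> block_of P v - T}"]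
      finite_part[OF X] finite_RT by (simp add: split_count_def)
  then have "(\<Sum>v\<in>X. \<Sum>u\<in>X - {v}. split_count P v u)
      = (\<Sum>v\<in>X. \<Sum>T\<in>RT P. card ((X - {v}) \<inter> {u. v \<in> T \<and> u \<in> block_of P v - T}))"
    by simp
  also have "\<dots> = (\<Sum>T\<in>RT P. q * card (X \<inter> T))"
    using per_T by (subst sum.swap) simp
  finally show ?thesis
    using card_part_Int_RT[OF P _ X] by (simp add: sum_distrib_left sum_distrib_right mult_ac)
qed

context
  fixes X a b
  assumes X: "X \<in> Parts" and a: "a \<in> X" and b: "b \<in> X"
begin

private abbreviation "\<tau> \<equiv> Transposition.transpose a b"

lemma transpose_part: "Y \<in> Parts \<Longrightarrow> \<tau> ` Y = Y"
  using part_unique[OF X] a b by (intro transpose_image_eq) blast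

lemma transpose_V: "\<tau> ` V = V"
  using part_subset[OF X] a b by (intro transpose_image_eq) blast

lemma transpose_RP:
  assumes P: "P \<in> RP"
  shows "(`) \<tau> ` P \<in> RP"
proof -
  have "partition_on (\<tau> ` V) ((`) \<tau> ` P - {{}})"
    by (rule partition_on_inj_image[OF RP_D(1)[OF P] inj_on_transpose])
  moreover have "{} \<notin> (`) \<tau> ` P" using partition_onD3[OF RP_D(1)[OF P]] by auto
  ultimately have "partition_on V ((`) \<tau> ` P)" using transpose_V by simp
  moreover have "card (\<tau> ` S) = r \<and> (\<exists>Y\<in>Parts. \<tau> ` S \<subseteq> Y)" if S: "S \<in> P" for S
  proof -
    obtain Y where "Y \<in> Parts" "S \<subseteq> Y" using RP_D(3)[OF P S] by blast
    then show ?thesis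
      using RP_D(2)[OF P S] card_image[OF inj_on_transpose] transpose_part by (metis image_mono)
  qed
  ultimately show ?thesis unfolding restricted_partitions_def by blast
qed

lemma transpose_RT:
  assumes "T \<in> RT P"
  shows "\<tau> ` T \<in> RT ((`) \<tau> ` P)"
proof -
  have "card (\<tau> ` S \<inter> \<tau> ` T) = p" if "S \<in> P" for S
    using card_block_Int_RT[OF assms that]
    by (simp add: image_Int[OF inj_transpose, symmetric] card_image)
  moreover have "\<tau> ` T \<subseteq> V" using assms transpose_V by (auto simp: restricted_T_def)
  ultimately show ?thesis by (auto simp: restricted_T_def Int_commute)
qed

lemma RT_transpose: "RT ((`) \<tau> ` P) = (`) \<tau> ` RT P"
proof
  show "(`) \<tau> ` RT P \<subseteq> RT ((`) \<tau> ` P)" using transpose_RT by blast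
  show "RT ((`) \<tau> ` P) \<subseteq> (`) \<tau> ` RT P"
  proof
    fix T assume "T \<in> RT ((`) \<tau> ` P)"
    then have "\<tau> ` T \<in> RT P" using transpose_RT[of T "(`) \<tau> ` P"] by (simp add: image_image)
    then show "T \<in> (`) \<tau> ` RT P" by (rule rev_image_eqI) (simp add: image_image)
  qed
qed

lemma split_count_transpose: "split_count ((`) \<tau> ` P) (\<tau> v) (\<tau> u) = split_count P v u"
proof -
  have "{T \<in> RT ((`) \<tau> ` P). \<tau> v \<in> T \<and> \<tau> u \<in> block_of ((`) \<tau> ` P) (\<tau> v) - T}
      = (`) \<tau> ` {T \<in> RT P. v \<in> T \<and> u \<in> block_of P v - T}"
    unfolding RT_transpose block_of_image[OF inj_transpose]
    by (rule set_eqI) (simp add: in_transpose_image_iff in_image_transpose_image_iff)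
  then show ?thesis unfolding split_count_def by (simp add: card_image inj_on_image_transpose)
qed

lemma image_transpose_RP: "(`) ((`) \<tau>) ` RP = RP"
proof
  show "(`) ((`) \<tau>) ` RP \<subseteq> RP" using transpose_RP by blast
  show "RP \<subseteq> (`) ((`) \<tau>) ` RP"
  proof
    fix P assume "P \<in> RP"
    then show "P \<in> (`) ((`) \<tau>) ` RP"
      using transpose_RP by (intro rev_image_eqI[of "(`) \<tau> ` P"]) (auto simp: image_image)
  qed
qed

lemma split_prob_transpose: "split_prob (\<tau> v) (\<tau> u) = split_prob v u"
proof -
  have inj: "inj_on ((`) ((`) \<tau>)) RP"
  proof (rule inj_onI)
    fix P P' assume "(`) \<tau> ` P = (`) \<tau> ` P'"
    then have "(`) \<tau> ` (`) \<tau> ` P = (`) \<tau> ` (`) \<tau> ` P'" by simp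
    then show "P = P'" by (simp add: image_comp)
  qed
  have "split_prob (\<tau> v) (\<tau> u)
      = (\<Sum>P\<in>(`) ((`) \<tau>) ` RP. real (split_count P (\<tau> v) (\<tau> u)) / real (card (RT P)))
        / real (card RP)"
    unfolding split_prob_def by (simp only: image_transpose_RP)
  also have "\<dots> = (\<Sum>P\<in>RP. real (split_count ((`) \<tau> ` P) (\<tau> v) (\<tau> u))
        / real (card (RT ((`) \<tau> ` P)))) / real (card RP)"
    by (simp only: sum.reindex[OF inj] comp_def)
  also have "\<dots> = split_prob v u"
    unfolding split_count_transpose RT_transpose split_prob_def
    by (simp add: card_image inj_on_image_transpose)
  finally show ?thesis .
qed

end

lemma sum_split_prob_part:
  assumes X: "X \<in> Parts"
  shows "(\<Sum>v\<in>X. \<Sum>u\<in>X - {v}. split_prob v u) = real p * real q * real (card X) / real r"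
proof -
  have "(\<Sum>v\<in>X. \<Sum>u\<in>X - {v}. real (split_count P v u)) / real (card (RT P))
      = real p * real q * real (card X) / real r" if P: "P \<in> RP" for P
  proof -
    have "real (card (RT P)) > 0" "real r > 0"
      using RT_nonempty[OF P] finite_RT p_pos r_eq by (auto simp: card_gt_0_iff)
    then show ?thesis
      using arg_cong[OF sum_split_count_part[OF P X], of real] by (simp add: field_simps)
  qed
  then have "(\<Sum>v\<in>X. \<Sum>u\<in>X - {v}. split_prob v u)
      = (\<Sum>P\<in>RP. real p * real q * real (card X) / real r) / real (card RP)"
    unfolding split_prob_def
    by (simp add: sum_divide_distrib[symmetric] sum.swap[of _ RP] sum.swap[of _ X])
  also have "\<dots> = real p * real q * real (card X) / real r"
    using finite_RP RP_nonempty by (simp add: card_gt_0_iff)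
  finally show ?thesis .
qed

lemma split_prob_eq:
  assumes X: "X \<in> Parts" and "v \<in> X" "u \<in> X" "v \<noteq> u"
  shows "split_prob v u = real p * real q / (real r * real (card X - 1))"
proof -
  have const: "split_prob v' u' = split_prob v u" if "v' \<in> X" "u' \<in> X" "v' \<noteq> u'" for v' u'
    using transpose_invariant_const_on_pairs[of X split_prob] split_prob_transpose[OF X]
      that assms by blast
  have "real p * real q * real (card X) / real r = (\<Sum>v'\<in>X. \<Sum>u'\<in>X - {v'}. split_prob v' u')"
    using sum_split_prob_part[OF X] by simp
  also have "\<dots> = (\<Sum>v'\<in>X. \<Sum>u'\<in>X - {v'}. split_prob v u)"
    using const by (intro sum.cong refl) auto
  also have "\<dots> = real (card X) * (real (card X - 1) * split_prob v u)"
    using finite_part[OF X] by simp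
  finally have "real p * real q * real (card X) / real r
      = real (card X) * (real (card X - 1) * split_prob v u)" .
  moreover have "real (card X) > 0" "real (card X - 1) > 0" "real r > 0"
    using two_le_card_part[OF X] p_pos r_eq by auto
  moreover have "c = x * y / (z * d)" if "x * y * m / z = m * (d * c)" "m > 0" "d > 0" "z > 0"
    for x y z m d c :: real
    using that by (simp add: field_simps)
  ultimately show ?thesis by blast
qed

lemma split_prob_eq_0:
  assumes "X \<in> Parts" "v \<in> X" "u \<notin> X - {v}"
  shows "split_prob v u = 0"
  using split_count_eq_0[OF _ assms] by (simp add: split_prob_def)

end

locale restricted_randomization_graph = restricted_randomization V Parts p q r
  for V :: "'a set" and Parts p q r +
  fixes E :: "'a \<Rightarrow> 'a \<Rightarrow> bool" and f :: "'a \<Rightarrow> 'a set \<Rightarrow> real" and K :: "'a \<Rightarrow> real"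
    and n :: nat
  assumes n_pos: "n > 0" and simple_graph: "simple_graph V E" and card_V: "card V = r * n"
    and nbhd_nonempty: "\<And>v. v \<in> V \<Longrightarrow> nbhd E v \<noteq> {}"
    and lipschitz: "\<And>v. v \<in> V \<Longrightarrow> lipschitz_fv E (f v) (K v) v"
begin

abbreviation "Kmax \<equiv> Max (K ` V)"
abbreviation "dmin \<equiv> min_deg V E"

lemma V_nonempty: "V \<noteq> {}"
  using card_V n_pos p_pos r_eq by auto

lemma finite_nbhd: "finite (nbhd E v)"
  using simple_graph finite_V by (auto simp: simple_graph_def nbhd_def intro: finite_subset)

lemma deg_pos: "v \<in> V \<Longrightarrow> deg E v > 0"
  using nbhd_nonempty finite_nbhd by (simp add: deg_def card_gt_0_iff)

lemma min_deg_le: "v \<in> V \<Longrightarrow> dmin \<le> deg E v"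
  using finite_V by (simp add: min_deg_def)

lemma min_deg_pos: "dmin > 0"
  using Min_in[of "deg E ` V"] finite_V V_nonempty deg_pos by (auto simp: min_deg_def)

lemma Kmax_pos: "Kmax > 0"
proof -
  obtain v where v: "v \<in> V" using V_nonempty by blast
  then have "K v > 0" using lipschitz by (simp add: lipschitz_fv_def)
  also have "K v \<le> Kmax" using finite_V v by simp
  finally show ?thesis .
qed

lemma abs_sum_sigma_le:
  assumes P: "P \<in> RP" and v: "v \<in> V"
  shows "\<bar>\<Sum>T\<in>RT P. sigma p q T v * f v (T \<inter> nbhd E v)\<bar>
         \<le> K v / deg E v * (\<Sum>u\<in>nbhd E v. real (split_count P v u))"
proof -
  define S where "S = block_of P v"
  define A where "A = {T \<in> RT P. v \<in> T}"
  have S: "S \<in> P" "v \<in> S" using block_of_RP[OF P v] by (auto simp: S_def)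
  have finA: "finite A" using finite_RT by (simp add: A_def)
  let ?G = "\<lambda>T. f v (T \<inter> nbhd E v)"
  let ?c = "K v / deg E v"
  have "(\<Sum>T\<in>RT P. sigma p q T v * ?G T) = (\<Sum>T\<in>A. \<Sum>w\<in>S - T. ?G T - ?G (insert w (T - {v})))"
    unfolding A_def
    by (rule exchange_identity[OF finite_RT finite_RP_block[OF P S(1)] S(2)
          card_block_Int_RT[OF _ S(1)] card_block_Diff_RT[OF P _ S(1)] RT_exchange[OF P S(1)]])
  also have "\<bar>\<dots>\<bar> \<le> (\<Sum>T\<in>A. \<Sum>w\<in>S - T. \<bar>?G T - ?G (insert w (T - {v}))\<bar>)"
    by (rule order_trans[OF sum_abs sum_mono[OF sum_abs]])
  also have "\<dots> \<le> (\<Sum>T\<in>A. \<Sum>w\<in>S - T. if w \<in> nbhd E v then ?c else 0)"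
    using simple_graph lipschitz[OF v]
    by (intro sum_mono lipschitz_fv_exchange) (auto simp: simple_graph_def)
  also have "\<dots> = (\<Sum>T\<in>A. ?c * card (nbhd E v \<inter> (S - T)))"
    using finite_RP_block[OF P S(1)]
    by (intro sum.cong refl) (simp add: sum.If_cases Int_commute mult.commute)
  also have "\<dots> = ?c * (\<Sum>T\<in>A. card (nbhd E v \<inter> (S - T)))"
    by (simp add: sum_distrib_left)
  also have "(\<Sum>T\<in>A. card (nbhd E v \<inter> (S - T))) = (\<Sum>u\<in>nbhd E v. split_count P v u)"
    using double_count_incidences[OF finA finite_nbhd, where R = "\<lambda>T. S - T"]
    by (simp add: A_def S_def split_count_def conj_ac)
  finally show ?thesis by simp
qed

definition xi_bound :: "'a set set \<Rightarrow> real" where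
  "xi_bound P = Kmax / (real p * real q * real n) *
     (\<Sum>v\<in>V. (\<Sum>u\<in>nbhd E v. real (split_count P v u) / real (card (RT P))) / real (deg E v))"

lemma abs_conditional_expectation_xi_le:
  assumes P: "P \<in> RP"
  shows "\<bar>measure_pmf.expectation (pmf_of_set (RT P)) (\<lambda>T. xi V E f p q n T)\<bar> \<le> xi_bound P"
proof -
  let ?N = "real p * real q * real n * real (card (RT P))"
  have N: "?N > 0"
    using p_pos q_pos n_pos RT_nonempty[OF P] finite_RT by (simp add: card_gt_0_iff)
  have xi_eq: "xi V E f p q n T
      = (\<Sum>v\<in>V. sigma p q T v * f v (T \<inter> nbhd E v)) / (real p * real q * real n)" for T
    by (simp add: xi_def)
  have "measure_pmf.expectation (pmf_of_set (RT P)) (\<lambda>T. xi V E f p q n T)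
      = (\<Sum>v\<in>V. \<Sum>T\<in>RT P. sigma p q T v * f v (T \<inter> nbhd E v)) / ?N"
    by (simp only: integral_pmf_of_set[OF RT_nonempty[OF P] finite_RT] xi_eq
        sum_divide_distrib[symmetric] divide_divide_eq_left sum.swap[of _ "RT P" V])
  also have "\<bar>\<dots>\<bar> \<le> (\<Sum>v\<in>V. Kmax / deg E v * (\<Sum>u\<in>nbhd E v. real (split_count P v u))) / ?N"
  proof -
    have "\<bar>\<Sum>v\<in>V. \<Sum>T\<in>RT P. sigma p q T v * f v (T \<inter> nbhd E v)\<bar>
        \<le> (\<Sum>v\<in>V. K v / deg E v * (\<Sum>u\<in>nbhd E v. real (split_count P v u)))"
      using abs_sum_sigma_le[OF P] by (rule order_trans[OF sum_abs sum_mono])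
    also have "\<dots> \<le> (\<Sum>v\<in>V. Kmax / deg E v * (\<Sum>u\<in>nbhd E v. real (split_count P v u)))"
      using finite_V deg_pos
      by (intro sum_mono mult_right_mono divide_right_mono Max_ge sum_nonneg) auto
    finally show ?thesis using N by (simp add: abs_divide divide_right_mono)
  qed
  also have "\<dots> = xi_bound P"
  proof -
    have "Kmax / deg E v * (\<Sum>u\<in>nbhd E v. real (split_count P v u)) / ?N
        = Kmax / (real p * real q * real n) *
          ((\<Sum>u\<in>nbhd E v. real (split_count P v u) / real (card (RT P))) / real (deg E v))" for v
      using N by (simp add: sum_divide_distrib[symmetric] field_simps)
    then show ?thesis
      unfolding xi_bound_def sum_divide_distrib sum_distrib_left by simp
  qed
  finally show ?thesis .
qed

lemma sum_nbhd_split_count_le: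
  assumes P: "P \<in> RP" and X: "X \<in> Parts" "v \<in> X"
  shows "(\<Sum>u\<in>nbhd E v. split_count P v u) \<le> (\<Sum>u\<in>X - {v}. split_count P v u)"
proof -
  have "(\<Sum>u\<in>nbhd E v. split_count P v u) = (\<Sum>u\<in>nbhd E v \<inter> (X - {v}). split_count P v u)"
    using split_count_eq_0[OF P X] finite_nbhd by (intro sum.mono_neutral_right) auto
  also have "\<dots> \<le> (\<Sum>u\<in>X - {v}. split_count P v u)"
    using finite_part[OF X(1)] by (intro sum_mono2) auto
  finally show ?thesis .
qed

lemma sum_sum_nbhd_split_count_le:
  assumes P: "P \<in> RP"
  shows "(\<Sum>v\<in>V. \<Sum>u\<in>nbhd E v. split_count P v u) \<le> card (RT P) * (p * q * n)"
proof -
  have "(\<Sum>X\<in>Parts. \<Sum>v\<in>X. \<Sum>u\<in>X - {v}. split_count P v u) * r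
      = (\<Sum>X\<in>Parts. (\<Sum>v\<in>X. \<Sum>u\<in>X - {v}. split_count P v u) * r)"
    by (rule sum_distrib_right)
  also have "\<dots> = (\<Sum>X\<in>Parts. card (RT P) * (p * q * card X))"
    using sum_split_count_part[OF P] by simp
  also have "\<dots> = card (RT P) * (p * q * (\<Sum>X\<in>Parts. card X))"
    by (simp only: sum_distrib_left)
  also have "\<dots> = card (RT P) * (p * q * n) * r"
    unfolding card_V_eq_sum_parts[symmetric] card_V by (simp add: mult_ac)
  finally have total: "(\<Sum>X\<in>Parts. \<Sum>v\<in>X. \<Sum>u\<in>X - {v}. split_count P v u)
      = card (RT P) * (p * q * n)"
    using p_pos r_eq by simp
  have "(\<Sum>v\<in>V. \<Sum>u\<in>nbhd E v. split_count P v u)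
      = (\<Sum>X\<in>Parts. \<Sum>v\<in>X. \<Sum>u\<in>nbhd E v. split_count P v u)"
    by (rule sum_partition_on[OF partition_Parts finite_V])
  also have "\<dots> \<le> (\<Sum>X\<in>Parts. \<Sum>v\<in>X. \<Sum>u\<in>X - {v}. split_count P v u)"
    using sum_nbhd_split_count_le[OF P] by (intro sum_mono) auto
  finally show ?thesis using total by simp
qed

lemma xi_bound_le:
  assumes P: "P \<in> RP"
  shows "xi_bound P \<le> Kmax / dmin"
proof -
  have RT: "real (card (RT P)) > 0" using RT_nonempty[OF P] finite_RT by (simp add: card_gt_0_iff)
  have "(\<Sum>v\<in>V. \<Sum>u\<in>nbhd E v. real (split_count P v u) / real (card (RT P)))
      = real (\<Sum>v\<in>V. \<Sum>u\<in>nbhd E v. split_count P v u) / real (card (RT P))"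
    by (simp add: sum_divide_distrib)
  also have "\<dots> \<le> real (card (RT P) * (p * q * n)) / real (card (RT P))"
    by (intro divide_right_mono of_nat_mono sum_sum_nbhd_split_count_le[OF P]) simp
  also have "\<dots> = real p * real q * real n" using RT by simp
  finally have count: "(\<Sum>v\<in>V. \<Sum>u\<in>nbhd E v. real (split_count P v u) / real (card (RT P)))
      \<le> real p * real q * real n" .
  have "(\<Sum>v\<in>V. (\<Sum>u\<in>nbhd E v. real (split_count P v u) / real (card (RT P))) / real (deg E v))
      \<le> (\<Sum>v\<in>V. (\<Sum>u\<in>nbhd E v. real (split_count P v u) / real (card (RT P))) / real dmin)"
    using min_deg_pos min_deg_le deg_pos
    by (intro sum_mono divide_left_mono sum_nonneg) auto
  also have "\<dots> = (\<Sum>v\<in>V. \<Sum>u\<in>nbhd E v. real (split_count P v u) / real (card (RT P)))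
      / real dmin"
    by (simp add: sum_divide_distrib)
  also have "\<dots> \<le> real p * real q * real n / real dmin"
    using count by (simp add: divide_right_mono)
  finally have "xi_bound P \<le> Kmax / (real p * real q * real n) * (real p * real q * real n / real dmin)"
    unfolding xi_bound_def using Kmax_pos by (intro mult_left_mono) auto
  also have "\<dots> = Kmax / dmin" using p_pos q_pos n_pos by simp
  finally show ?thesis .
qed

lemma sq_conditional_expectation_xi_le:
  assumes P: "P \<in> RP"
  shows "(measure_pmf.expectation (pmf_of_set (RT P)) (\<lambda>T. xi V E f p q n T))\<^sup>2
         \<le> Kmax / dmin * xi_bound P"
proof -
  let ?e = "measure_pmf.expectation (pmf_of_set (RT P)) (\<lambda>T. xi V E f p q n T)"
  have "?e\<^sup>2 = \<bar>?e\<bar> * \<bar>?e\<bar>" by (simp add: power2_eq_square)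
  also have "\<dots> \<le> xi_bound P * xi_bound P"
    using abs_conditional_expectation_xi_le[OF P] by (intro mult_mono) auto
  also have "\<dots> \<le> Kmax / dmin * xi_bound P"
    using xi_bound_le[OF P] abs_conditional_expectation_xi_le[OF P]
    by (intro mult_right_mono) auto
  finally show ?thesis .
qed

lemma average_xi_bound:
  "(\<Sum>P\<in>RP. xi_bound P) / real (card RP)
   = Kmax / (real p * real q * real n) * (\<Sum>v\<in>V. (\<Sum>u\<in>nbhd E v. split_prob v u) / real (deg E v))"
proof -
  let ?a = "\<lambda>P v u. real (split_count P v u) / real (card (RT P))"
  have "(\<Sum>P\<in>RP. xi_bound P) / real (card RP) = Kmax / (real p * real q * real n) *
      ((\<Sum>P\<in>RP. \<Sum>v\<in>V. (\<Sum>u\<in>nbhd E v. ?a P v u) / real (deg E v)) / real (card RP))"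
    by (simp only: xi_bound_def sum_distrib_left[symmetric] times_divide_eq_right)
  also have "(\<Sum>P\<in>RP. \<Sum>v\<in>V. (\<Sum>u\<in>nbhd E v. ?a P v u) / real (deg E v)) / real (card RP)
      = (\<Sum>v\<in>V. (\<Sum>P\<in>RP. (\<Sum>u\<in>nbhd E v. ?a P v u) / real (deg E v)) / real (card RP))"
    by (simp add: sum_divide_distrib sum.swap[of _ RP])
  also have "\<dots> = (\<Sum>v\<in>V. (\<Sum>u\<in>nbhd E v. split_prob v u) / real (deg E v))"
    unfolding split_prob_def
    by (intro sum.cong refl)
      (simp add: sum_divide_distrib sum.swap[of _ RP] divide_divide_eq_left mult_ac)
  finally show ?thesis .
qed

lemma sum_split_prob_le:
  "(\<Sum>v\<in>V. (\<Sum>u\<in>nbhd E v. split_prob v u) / real (deg E v))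
   \<le> 2 * real p * real q * real (card Parts) / real r"
proof -
  have part: "(\<Sum>v\<in>X. (\<Sum>u\<in>nbhd E v. split_prob v u) / real (deg E v)) \<le> 2 * real p * real q / real r"
    if X: "X \<in> Parts" for X
  proof -
    let ?c = "real p * real q / (real r * real (card X - 1))"
    have c: "?c \<ge> 0" by simp
    have "(\<Sum>u\<in>nbhd E v. split_prob v u) / real (deg E v) \<le> ?c" if v: "v \<in> X" for v
    proof -
      have "split_prob v u \<le> ?c" if "u \<in> nbhd E v" for u
        using split_prob_eq[OF X v] split_prob_eq_0[OF X v] c by (cases "u \<in> X - {v}") auto
      then have "(\<Sum>u\<in>nbhd E v. split_prob v u) \<le> real (deg E v) * ?c"
        using sum_mono[of "nbhd E v" "split_prob v" "\<lambda>_. ?c"] by (simp add: deg_def)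
      then show ?thesis
        using deg_pos part_subset[OF X] v by (simp add: divide_le_eq mult.commute subset_iff)
    qed
    then have "(\<Sum>v\<in>X. (\<Sum>u\<in>nbhd E v. split_prob v u) / real (deg E v)) \<le> real (card X) * ?c"
      using sum_mono[of X _ "\<lambda>_. ?c"] by simp
    also have "\<dots> \<le> 2 * real p * real q / real r"
    proof -
      have "real (card X) \<le> 2 * real (card X - 1)" "real (card X - 1) > 0" "real r > 0"
        using two_le_card_part[OF X] p_pos r_eq by auto
      then show ?thesis by (simp add: field_simps mult_left_mono)
    qed
    finally show ?thesis .
  qed
  have "(\<Sum>v\<in>V. (\<Sum>u\<in>nbhd E v. split_prob v u) / real (deg E v))
      = (\<Sum>X\<in>Parts. \<Sum>v\<in>X. (\<Sum>u\<in>nbhd E v. split_prob v u) / real (deg E v))"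
    by (rule sum_partition_on[OF partition_Parts finite_V])
  also have "\<dots> \<le> (\<Sum>X\<in>Parts. 2 * real p * real q / real r)"
    using part by (rule sum_mono)
  finally show ?thesis by (simp add: mult_ac)
qed

end

theorem mainTheorem17:
  fixes V :: "'a set" and E :: "'a \<Rightarrow> 'a \<Rightarrow> bool"
    and f :: "'a \<Rightarrow> 'a set \<Rightarrow> real" and K :: "'a \<Rightarrow> real"
    and n p q r :: nat and Parts :: "'a set set"
  assumes "n > 0" "p > 0" "q > 0" "r = p + q"
    and "simple_graph V E" "card V = r * n"
    and "\<forall>v\<in>V. nbhd E v \<noteq> {}"
    and "\<forall>v\<in>V. f v {} = 0"
    and "\<forall>v\<in>V. lipschitz_fv E (f v) (K v) v"
    and "partition_on V Parts" "\<forall>X\<in>Parts. r dvd card X"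
  shows "measure_pmf.expectation (pmf_of_set (restricted_partitions V r Parts))
           (\<lambda>P. (measure_pmf.expectation (pmf_of_set (restricted_T V p P))
                    (\<lambda>T. xi V E f p q n T))\<^sup>2)
         \<le> 2 * (Max (K ` V))\<^sup>2 * real (card Parts) / (real n * real r * real (min_deg V E))"
proof -
  interpret restricted_randomization_graph V Parts p q r E f K n
    using assms by unfold_locales (auto simp: simple_graph_def)
  let ?ET = "\<lambda>P. measure_pmf.expectation (pmf_of_set (RT P)) (\<lambda>T. xi V E f p q n T)"
  let ?pqn = "real p * real q * real n"
  have "measure_pmf.expectation (pmf_of_set RP) (\<lambda>P. (?ET P)\<^sup>2) = (\<Sum>P\<in>RP. (?ET P)\<^sup>2) / card RP"
    by (rule integral_pmf_of_set[OF RP_nonempty finite_RP])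
  also have "\<dots> \<le> (\<Sum>P\<in>RP. Kmax / dmin * xi_bound P) / card RP"
    using sq_conditional_expectation_xi_le by (intro divide_right_mono sum_mono) auto
  also have "\<dots> = Kmax / dmin * ((\<Sum>P\<in>RP. xi_bound P) / card RP)"
    by (simp only: sum_distrib_left[symmetric] times_divide_eq_right)
  also have "\<dots> = Kmax / dmin * (Kmax / ?pqn * (\<Sum>v\<in>V. (\<Sum>u\<in>nbhd E v. split_prob v u) / deg E v))"
    by (simp only: average_xi_bound)
  also have "\<dots> \<le> Kmax / dmin * (Kmax / ?pqn * (2 * real p * real q * real (card Parts) / real r))"
    using sum_split_prob_le Kmax_pos min_deg_pos by (intro mult_left_mono) auto
  also have "\<dots> = 2 * Kmax\<^sup>2 * real (card Parts) / (real n * real r * real dmin)"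
    using p_pos q_pos by (simp add: field_simps power2_eq_square)
  finally show ?thesis .
qed

end
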